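(* Fix $i\in\{1,\dots,\bar m\}$. Suppose $(A,B,K,\bar b,\bar D_{[i]})$ with $\bar D_{[i]}\in\mathbb{D}_+^{\bar m}$ satisfies condition (PI$_i$). Consider the LMI in the variables $(\mathbf A,\mathbf B,\mathbf K,\bar{\mathbf b},\hat{\bar{\mathbf D}}_{[i]})$: $$\begin{bmatrix} \mathbf I & \mathbf 0 & -\mathbf B^\top\bar P_i^\top & \mathbf K\\ * & \hat{\bar{\mathbf D}}_{[i]} & \bar{\mathbf b} & \mathbf 0\\ * & * & 2\bar{\mathbf b}_i+\mathcal{L}^{B^\top\bar P_i^\top,\mathbf I}_{\mathbf B^\top\bar P_i^\top,\mathbf I} & \bar P_i\mathbf A\\ * & * & * & \mathcal{L}^{\bar P,\bar D_{[i]}^{-1}}_{\bar P,\hat{\bar{\mathbf D}}_{[i]}}+\mathcal{L}^{K,\mathbf I}_{\mathbf K,\mathbf I} \end{bmatrix}\succ0 .$$ Then (a) it is satisfied by $(A,B,K,\bar b,\bar D_{[i]}^{-1})$; and (b) any solution with $\hat{\bar{\mathbf D}}_{[i]}\in\mathbb{D}_+^{\bar m}$ is such that $(\mathbf A,\mathbf B,\mathbf K,\bar{\mathbf b},\hat{\bar{\mathbf D}}_{[i]}^{-1})$ satisfies condition (PI$_i$).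
   Context: Notation: $M_i$ is the $i$-th row of $M$, $b_i$ the $i$-th entry of $b$; $\mathbb{D}_+^m$ is the set of $m\times m$ diagonal matrices with positive diagonal; $\succ0$ means symmetric positive definite; $*$ denotes symmetric blocks; $\mathbf I,\mathbf 0$ identity/zero blocks of appropriate size (the first diagonal $\mathbf I$ is $n_u\times n_u$). For $\mathbf L,L\in\mathbb{R}^{m\times n}$ and symmetric invertible $\mathbf D,D\in\mathbb{R}^{m\times m}$, $\mathcal{L}^{L,D}_{\mathbf L,\mathbf D}:=\mathbf L^\top D^{-1}L+L^\top D^{-1}\mathbf L-L^\top D^{-1}\mathbf DD^{-1}L$. Fixed data: $\bar P\in\mathbb{R}^{\bar m\times n_x}$. Variables: $A\in\mathbb{R}^{n_x\times n_x}$, $B\in\mathbb{R}^{n_x\times n_u}$, $K\in\mathbb{R}^{n_u\times n_x}$, $\bar b\in\mathbb{R}^{\bar m}$ (bold versions same sizes). Condition (PI$_i$) for $(A,B,K,\bar b,\bar D_{[i]})$: $$\begin{bmatrix}2\bar b_i-\bar b^\top\bar D_{[i]}\bar b & \bar P_i(A+BK)\\ * & \bar P^\top\bar D_{[i]}\bar P\end{bmatrix}\succ0.$$ *)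

theory Defs
  imports "Jordan_Normal_Form.Matrix"
begin

definition pos_def_mat :: "nat \<Rightarrow> real mat \<Rightarrow> bool" where
  "pos_def_mat n M \<longleftrightarrow> M \<in> carrier_mat n n \<and> transpose_mat M = M \<and>
     (\<forall>x \<in> carrier_vec n. x \<noteq> 0\<^sub>v n \<longrightarrow> x \<bullet> (M *\<^sub>v x) > 0)"

definition diag_pos_mat :: "nat \<Rightarrow> real mat \<Rightarrow> bool" where
  "diag_pos_mat m D \<longleftrightarrow> D \<in> carrier_mat m m \<and> diagonal_mat D \<and> (\<forall>j<m. D $$ (j,j) > 0)"

(* \<L>^{L,D}_{Lb,Db}; the argument Dinv is the inverse D^{-1} of the (plain) matrix D *)
definition Lop :: "real mat \<Rightarrow> real mat \<Rightarrow> real mat \<Rightarrow> real mat \<Rightarrow> real mat" where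
  "Lop Lb Db L Dinv = transpose_mat Lb * Dinv * L + transpose_mat L * Dinv * Lb
                      - transpose_mat L * Dinv * Db * Dinv * L"

definition row_mat :: "real mat \<Rightarrow> nat \<Rightarrow> real mat" where
  "row_mat P i = mat_of_row (row P i)"

definition scal_mat :: "real \<Rightarrow> real mat" where
  "scal_mat c = mat 1 1 (\<lambda>_. c)"

definition block4 ::
  "real mat \<Rightarrow> real mat \<Rightarrow> real mat \<Rightarrow> real mat \<Rightarrow>
   real mat \<Rightarrow> real mat \<Rightarrow> real mat \<Rightarrow> real mat \<Rightarrow>
   real mat \<Rightarrow> real mat \<Rightarrow> real mat \<Rightarrow> real mat \<Rightarrow>
   real mat \<Rightarrow> real mat \<Rightarrow> real mat \<Rightarrow> real mat \<Rightarrow> real mat" where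
  "block4 M11 M12 M13 M14 M21 M22 M23 M24 M31 M32 M33 M34 M41 M42 M43 M44 =
     four_block_mat
       (four_block_mat M11 M12 M21 M22) (four_block_mat M13 M14 M23 M24)
       (four_block_mat M31 M32 M41 M42) (four_block_mat M33 M34 M43 M44)"

definition PI_cond :: "nat \<Rightarrow> real mat \<Rightarrow> nat \<Rightarrow>
    real mat \<Rightarrow> real mat \<Rightarrow> real mat \<Rightarrow> real vec \<Rightarrow> real mat \<Rightarrow> bool" where
  "PI_cond nx Pbar i A B K b D \<longleftrightarrow>
     pos_def_mat (1 + nx)
       (four_block_mat
          (scal_mat (2 * b $ i - b \<bullet> (D *\<^sub>v b)))  (row_mat Pbar i * (A + B * K))
          (transpose_mat (row_mat Pbar i * (A + B * K)))  (transpose_mat Pbar * D * Pbar))"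

(* The LMI of Theorem 3, with fixed (B,K,Dbar) from the given solution of (PI_i),
   in the variables (Ab,Bb,Kb,bb,Dh) *)
definition LMI_i :: "nat \<Rightarrow> nat \<Rightarrow> nat \<Rightarrow> real mat \<Rightarrow> nat \<Rightarrow>
    real mat \<Rightarrow> real mat \<Rightarrow> real mat \<Rightarrow>
    real mat \<Rightarrow> real mat \<Rightarrow> real mat \<Rightarrow> real vec \<Rightarrow> real mat \<Rightarrow> bool" where
  "LMI_i nx nu m Pbar i B K Dbar Ab Bb Kb bb Dh \<longleftrightarrow>
     (let Pi = row_mat Pbar i;
          M11 = 1\<^sub>m nu; M12 = 0\<^sub>m nu m;
          M13 = - (transpose_mat Bb * transpose_mat Pi); M14 = Kb;
          M22 = Dh; M23 = mat_of_cols m [bb]; M24 = 0\<^sub>m m nx;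
          M33 = scal_mat (2 * bb $ i)
                + Lop (transpose_mat Bb * transpose_mat Pi) (1\<^sub>m nu)
                      (transpose_mat B * transpose_mat Pi) (1\<^sub>m nu);
          M34 = Pi * Ab;
          M44 = Lop Pbar Dh Pbar Dbar + Lop Kb (1\<^sub>m nu) K (1\<^sub>m nu)
      in pos_def_mat (nu + m + 1 + nx)
           (block4 M11 M12 M13 M14
                   (transpose_mat M12) M22 M23 M24
                   (transpose_mat M13) (transpose_mat M23) M33 M34
                   (transpose_mat M14) (transpose_mat M24) (transpose_mat M34) M44))"

end

theory Submission
  imports Defs
begin

(* The LMI matrix has leading block
   diag(I, Dh) with inverse diag(I, Dh^-1), so completing the square shows that it is positive
   definite iff its Schur complement with respect to that block is. The Schur form equals the
   form of the (PI_i) matrix at Dh^-1 minus three gaps of the shape Lb^T Db^-1 Lb - Lop Lb Db L Dinv.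
   Young's inequality 2 a.w - w.(Db w) <= a.(Db^-1 a) makes the gaps nonnegative, which gives (b);
   with the true data the gaps vanish, which gives (a). *)

lemma pos_def_mat_nonneg:
  assumes "pos_def_mat n M" "x \<in> carrier_vec n"
  shows "0 \<le> x \<bullet> (M *\<^sub>v x)"
  using assms by (cases "x = 0\<^sub>v n") (auto simp: pos_def_mat_def less_imp_le)

lemma scalar_prod_mult_mat_vec_commute:
  fixes M :: "'a :: comm_ring_1 mat"
  assumes "M \<in> carrier_mat n n" "transpose_mat M = M" "u \<in> carrier_vec n" "w \<in> carrier_vec n"
  shows "u \<bullet> (M *\<^sub>v w) = w \<bullet> (M *\<^sub>v u)"
  using transpose_vec_mult_scalar[of M n n u w] comm_scalar_prod[of u n "M *\<^sub>v w"] assms by auto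

lemma quadratic_form_add:
  fixes M :: "'a :: comm_ring_1 mat"
  assumes "M \<in> carrier_mat n n" "transpose_mat M = M" "u \<in> carrier_vec n" "w \<in> carrier_vec n"
  shows "(u + w) \<bullet> (M *\<^sub>v (u + w)) = u \<bullet> (M *\<^sub>v u) + 2 * (u \<bullet> (M *\<^sub>v w)) + w \<bullet> (M *\<^sub>v w)"
  using assms scalar_prod_mult_mat_vec_commute[OF assms]
  by (simp add: mult_add_distrib_mat_vec[of M n n] add_scalar_prod_distrib[of _ n]
      scalar_prod_add_distrib[of _ n] algebra_simps)

lemma quadratic_form_diff:
  fixes M :: "'a :: comm_ring_1 mat"
  assumes "M \<in> carrier_mat n n" "transpose_mat M = M" "u \<in> carrier_vec n" "w \<in> carrier_vec n"
  shows "(u - w) \<bullet> (M *\<^sub>v (u - w)) = u \<bullet> (M *\<^sub>v u) - 2 * (u \<bullet> (M *\<^sub>v w)) + w \<bullet> (M *\<^sub>v w)"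
  using assms scalar_prod_mult_mat_vec_commute[OF assms]
  by (simp add: mult_minus_distrib_mat_vec[of M n n] minus_scalar_prod_distrib[of _ n]
      scalar_prod_minus_distrib[of _ n] algebra_simps)

lemma quadratic_form_four_block_mat:
  fixes A B C :: "'a :: comm_ring_1 mat"
  assumes "A \<in> carrier_mat n n" "B \<in> carrier_mat n k" "C \<in> carrier_mat k k"
    "u \<in> carrier_vec n" "y \<in> carrier_vec k"
  shows "(u @\<^sub>v y) \<bullet> (four_block_mat A B (transpose_mat B) C *\<^sub>v (u @\<^sub>v y))
    = u \<bullet> (A *\<^sub>v u) + 2 * (u \<bullet> (B *\<^sub>v y)) + y \<bullet> (C *\<^sub>v y)"
proof -
  have "y \<bullet> (transpose_mat B *\<^sub>v u) = u \<bullet> (B *\<^sub>v y)"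
    using transpose_vec_mult_scalar[of B n k y u] comm_scalar_prod[of y k] assms by auto
  then show ?thesis
    using assms
    by (simp add: four_block_mat_mult_vec[OF assms(1,2) _ assms(3-5)] scalar_prod_append[of _ n _ k]
        scalar_prod_add_distrib[of _ n] scalar_prod_add_distrib[of _ k])
qed

lemma quadratic_form_four_block_mat_complete_square:
  fixes A B C E :: "'a :: comm_ring_1 mat"
  assumes A: "A \<in> carrier_mat n n" "transpose_mat A = A" and E: "E \<in> carrier_mat n n" "A * E = 1\<^sub>m n"
    and B: "B \<in> carrier_mat n k" and C: "C \<in> carrier_mat k k"
    and u: "u \<in> carrier_vec n" and y: "y \<in> carrier_vec k"
  shows "(u @\<^sub>v y) \<bullet> (four_block_mat A B (transpose_mat B) C *\<^sub>v (u @\<^sub>v y))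
    = (u + E *\<^sub>v (B *\<^sub>v y)) \<bullet> (A *\<^sub>v (u + E *\<^sub>v (B *\<^sub>v y)))
      + (y \<bullet> (C *\<^sub>v y) - (B *\<^sub>v y) \<bullet> (E *\<^sub>v (B *\<^sub>v y)))"
proof -
  define w where "w = E *\<^sub>v (B *\<^sub>v y)"
  have By: "B *\<^sub>v y \<in> carrier_vec n" and w: "w \<in> carrier_vec n" using B E y by (auto simp: w_def)
  have Aw: "A *\<^sub>v w = B *\<^sub>v y"
    using assoc_mult_mat_vec[OF A(1) E(1) By] E(2) By by (simp add: w_def)
  show ?thesis
    using quadratic_form_four_block_mat[OF A(1) B C u y] quadratic_form_add[OF A u w]
      comm_scalar_prod[OF w By]
    unfolding Aw w_def[symmetric] by simp
qed

lemma pos_def_mat_four_block_mat_iff: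
  fixes A B C E :: "real mat"
  assumes A: "pos_def_mat n A" and E: "E \<in> carrier_mat n n" "A * E = 1\<^sub>m n"
    and B: "B \<in> carrier_mat n k" and C: "C \<in> carrier_mat k k" "transpose_mat C = C"
  shows "pos_def_mat (n + k) (four_block_mat A B (transpose_mat B) C) \<longleftrightarrow>
    (\<forall>y \<in> carrier_vec k. y \<noteq> 0\<^sub>v k \<longrightarrow> (B *\<^sub>v y) \<bullet> (E *\<^sub>v (B *\<^sub>v y)) < y \<bullet> (C *\<^sub>v y))"
    (is "pos_def_mat _ ?M \<longleftrightarrow> _")
proof -
  have Ac: "A \<in> carrier_mat n n" "transpose_mat A = A" using A by (auto simp: pos_def_mat_def)
  note square = quadratic_form_four_block_mat_complete_square[OF Ac E B C(1)]
  show ?thesis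
  proof
    assume M: "pos_def_mat (n + k) ?M"
    show "\<forall>y \<in> carrier_vec k. y \<noteq> 0\<^sub>v k \<longrightarrow> (B *\<^sub>v y) \<bullet> (E *\<^sub>v (B *\<^sub>v y)) < y \<bullet> (C *\<^sub>v y)"
    proof (intro ballI impI)
      fix y :: "real vec" assume y: "y \<in> carrier_vec k" "y \<noteq> 0\<^sub>v k"
      define u where "u = - (E *\<^sub>v (B *\<^sub>v y))"
      have u: "u \<in> carrier_vec n" using E B y by (auto simp: u_def)
      have "0\<^sub>v (n + k) = 0\<^sub>v n @\<^sub>v (0\<^sub>v k :: real vec)" by auto
      then have "u @\<^sub>v y \<noteq> 0\<^sub>v (n + k)"
        using y append_vec_eq[OF u, of "0\<^sub>v n" y "0\<^sub>v k"] by auto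
      then have "0 < (u @\<^sub>v y) \<bullet> (?M *\<^sub>v (u @\<^sub>v y))"
        using M u y by (auto simp: pos_def_mat_def)
      moreover have "u + E *\<^sub>v (B *\<^sub>v y) = 0\<^sub>v n"
        using E B y by (auto simp: u_def)
      ultimately show "(B *\<^sub>v y) \<bullet> (E *\<^sub>v (B *\<^sub>v y)) < y \<bullet> (C *\<^sub>v y)"
        using square[OF u y(1)] Ac(1) by auto
    qed
  next
    assume schur: "\<forall>y \<in> carrier_vec k. y \<noteq> 0\<^sub>v k \<longrightarrow> (B *\<^sub>v y) \<bullet> (E *\<^sub>v (B *\<^sub>v y)) < y \<bullet> (C *\<^sub>v y)"
    have "0 < x \<bullet> (?M *\<^sub>v x)" if x: "x \<in> carrier_vec (n + k)" "x \<noteq> 0\<^sub>v (n + k)" for x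
    proof -
      define u y where "u = vec_first x n" and "y = vec_last x k"
      have u: "u \<in> carrier_vec n" and y: "y \<in> carrier_vec k" and xuy: "x = u @\<^sub>v y"
        using x by (auto simp: u_def y_def)
      have Euy: "u + E *\<^sub>v (B *\<^sub>v y) \<in> carrier_vec n" using u E B y by auto
      show ?thesis
      proof (cases "y = 0\<^sub>v k")
        case True
        then have "u \<noteq> 0\<^sub>v n" using x xuy by auto
        moreover have "B *\<^sub>v y = 0\<^sub>v n" "E *\<^sub>v 0\<^sub>v n = 0\<^sub>v n" "C *\<^sub>v y = 0\<^sub>v k"
          using B C(1) E(1) True by auto
        ultimately show ?thesis
          using A u y unfolding xuy square[OF u y] by (auto simp: pos_def_mat_def)
      next
        case False
        then show ?thesis
          using schur y pos_def_mat_nonneg[OF A Euy] unfolding xuy square[OF u y] by auto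
      qed
    qed
    moreover have "transpose_mat ?M = ?M"
      using Ac B C by (simp add: transpose_four_block_mat[of A n n B k])
    ultimately show "pos_def_mat (n + k) ?M"
      using Ac B C by (auto simp: pos_def_mat_def)
  qed
qed

lemma pos_def_mat_four_block_diag:
  fixes A D :: "real mat"
  assumes A: "pos_def_mat n A" and D: "pos_def_mat k D"
  shows "pos_def_mat (n + k) (four_block_mat A (0\<^sub>m n k) (0\<^sub>m k n) D)"
proof -
  have Ac: "A \<in> carrier_mat n n" "transpose_mat A = A" and Dc: "D \<in> carrier_mat k k" "transpose_mat D = D"
    using A D by (auto simp: pos_def_mat_def)
  have "0 < x \<bullet> (four_block_mat A (0\<^sub>m n k) (0\<^sub>m k n) D *\<^sub>v x)"
    if x: "x \<in> carrier_vec (n + k)" "x \<noteq> 0\<^sub>v (n + k)" for x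
  proof -
    define u y where "u = vec_first x n" and "y = vec_last x k"
    have u: "u \<in> carrier_vec n" and y: "y \<in> carrier_vec k" and xuy: "x = u @\<^sub>v y"
      using x by (auto simp: u_def y_def)
    have "u \<noteq> 0\<^sub>v n \<or> y \<noteq> 0\<^sub>v k" using x xuy by auto
    then have "0 < u \<bullet> (A *\<^sub>v u) + y \<bullet> (D *\<^sub>v y)"
      using A D u y pos_def_mat_nonneg[OF A u] pos_def_mat_nonneg[OF D y]
      by (auto simp: pos_def_mat_def add_pos_nonneg add_nonneg_pos)
    moreover have "0\<^sub>m n k *\<^sub>v y = 0\<^sub>v n" using y by auto
    ultimately show ?thesis
      using quadratic_form_four_block_mat[OF Ac(1) zero_carrier_mat Dc(1) u y] u
      unfolding xuy by simp
  qed
  then show ?thesis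
    using Ac Dc transpose_four_block_mat[OF Ac(1) zero_carrier_mat zero_carrier_mat Dc(1)]
    by (auto simp: pos_def_mat_def)
qed

lemma pos_def_mat_inverse:
  fixes D X :: "real mat"
  assumes D: "pos_def_mat n D" and X: "X \<in> carrier_mat n n" "D * X = 1\<^sub>m n"
  shows "pos_def_mat n X" "X * D = 1\<^sub>m n"
proof -
  have Dc: "D \<in> carrier_mat n n" "transpose_mat D = D" using D by (auto simp: pos_def_mat_def)
  have XtD: "transpose_mat X * D = 1\<^sub>m n"
    using arg_cong[OF X(2), of transpose_mat] transpose_mult[OF Dc(1) X(1)] Dc(2) by simp
  have "X = (transpose_mat X * D) * X" using XtD X by simp
  also have "\<dots> = transpose_mat X * (D * X)" using Dc X by (auto intro: assoc_mult_mat)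
  also have "\<dots> = transpose_mat X" using X by simp
  finally have Xs: "transpose_mat X = X" ..
  then show "X * D = 1\<^sub>m n" using XtD by simp
  have "0 < x \<bullet> (X *\<^sub>v x)" if x: "x \<in> carrier_vec n" "x \<noteq> 0\<^sub>v n" for x
  proof -
    define z where "z = X *\<^sub>v x"
    have z: "z \<in> carrier_vec n" using X x by (simp add: z_def)
    have Dz: "D *\<^sub>v z = x" using assoc_mult_mat_vec[OF Dc(1) X(1) x(1)] X(2) x(1) by (simp add: z_def)
    then have "z \<noteq> 0\<^sub>v n" using Dc(1) x(2) by auto
    then have "0 < z \<bullet> (D *\<^sub>v z)" using D z by (auto simp: pos_def_mat_def)
    then show ?thesis using comm_scalar_prod[OF z x(1)] Dz by (simp add: z_def)
  qed
  then show "pos_def_mat n X" using X Xs by (auto simp: pos_def_mat_def)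
qed

lemma diag_pos_mat_imp_pos_def_mat:
  fixes D :: "real mat"
  assumes "diag_pos_mat n D"
  shows "pos_def_mat n D"
proof -
  have D: "D \<in> carrier_mat n n" "diagonal_mat D" "\<And>j. j < n \<Longrightarrow> 0 < D $$ (j, j)"
    using assms by (auto simp: diag_pos_mat_def)
  have Dx: "D *\<^sub>v x = vec n (\<lambda>j. D $$ (j, j) * x $ j)" if x: "x \<in> carrier_vec n" for x
  proof (rule eq_vecI)
    fix j assume "j < dim_vec (vec n (\<lambda>j. D $$ (j, j) * x $ j))"
    then have j: "j < n" by simp
    have "(D *\<^sub>v x) $ j = (\<Sum>l\<in>{0..<n}. D $$ (j, l) * x $ l)"
      using D x j by (simp add: scalar_prod_def)
    also have "\<dots> = D $$ (j, j) * x $ j"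
      using D j by (subst sum.remove[of _ j]) (auto simp: diagonal_mat_def intro!: sum.neutral)
    finally show "(D *\<^sub>v x) $ j = vec n (\<lambda>j. D $$ (j, j) * x $ j) $ j" using j by simp
  qed (use D x in auto)
  have "0 < x \<bullet> (D *\<^sub>v x)" if x: "x \<in> carrier_vec n" "x \<noteq> 0\<^sub>v n" for x
  proof -
    have "\<exists>j<n. x $ j \<noteq> 0"
    proof (rule ccontr)
      assume "\<not> (\<exists>j<n. x $ j \<noteq> 0)"
      then have "x = 0\<^sub>v n" using x(1) by (intro eq_vecI) auto
      with x(2) show False ..
    qed
    then obtain j where j: "j < n" "x $ j \<noteq> 0" by blast
    have "x \<bullet> (D *\<^sub>v x) = (\<Sum>l\<in>{0..<n}. D $$ (l, l) * (x $ l)\<^sup>2)"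
      using x by (auto simp: Dx scalar_prod_def power2_eq_square intro!: sum.cong)
    also have "\<dots> > 0"
      using j by (intro sum_pos2[of _ j]) (auto simp: D(3) less_imp_le)
    finally show ?thesis .
  qed
  moreover have "transpose_mat D = D"
    using D by (intro eq_matI) (auto simp: diagonal_mat_def, metis)
  ultimately show ?thesis using D by (auto simp: pos_def_mat_def)
qed

lemma pos_def_mat_one: "pos_def_mat n (1\<^sub>m n :: real mat)"
  by (rule diag_pos_mat_imp_pos_def_mat) (auto simp: diag_pos_mat_def diagonal_mat_def)

lemma two_scalar_prod_le_quadratic_forms:
  fixes D E :: "real mat"
  assumes D: "pos_def_mat n D" and E: "E \<in> carrier_mat n n" "D * E = 1\<^sub>m n"
    and a: "a \<in> carrier_vec n" and v: "v \<in> carrier_vec n"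
  shows "2 * (a \<bullet> v) - v \<bullet> (D *\<^sub>v v) \<le> a \<bullet> (E *\<^sub>v a)"
proof -
  have Dc: "D \<in> carrier_mat n n" "transpose_mat D = D" using D by (auto simp: pos_def_mat_def)
  have Ea: "E *\<^sub>v a \<in> carrier_vec n" using E a by simp
  have DEa: "D *\<^sub>v (E *\<^sub>v a) = a" using assoc_mult_mat_vec[OF Dc(1) E(1) a] E(2) a by simp
  have "0 \<le> (v - E *\<^sub>v a) \<bullet> (D *\<^sub>v (v - E *\<^sub>v a))"
    using pos_def_mat_nonneg[OF D] v Ea by simp
  also have "\<dots> = v \<bullet> (D *\<^sub>v v) - 2 * (a \<bullet> v) + a \<bullet> (E *\<^sub>v a)"
    using quadratic_form_diff[OF Dc v Ea] comm_scalar_prod[OF v a] comm_scalar_prod[OF Ea a]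
    unfolding DEa by simp
  finally show ?thesis by simp
qed

lemma scalar_prod_transpose_mult_vec:
  fixes X :: "'a :: comm_ring_1 mat"
  assumes "X \<in> carrier_mat p n" "v \<in> carrier_vec n" "w \<in> carrier_vec p"
  shows "v \<bullet> (transpose_mat X *\<^sub>v w) = (X *\<^sub>v v) \<bullet> w"
  using assms transpose_vec_mult_scalar[of X p n v w] comm_scalar_prod[of v n "transpose_mat X *\<^sub>v w"]
    comm_scalar_prod[of w p "X *\<^sub>v v"]
  by auto

lemma Lop_eq:
  fixes Lb L D Dinv :: "real mat"
  assumes "Lb \<in> carrier_mat p n" "L \<in> carrier_mat p n" "D \<in> carrier_mat p p" "Dinv \<in> carrier_mat p p"
    "transpose_mat Dinv = Dinv"
  shows "Lop Lb D L Dinv = transpose_mat Lb * (Dinv * L) + transpose_mat (Dinv * L) * Lb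
    - transpose_mat (Dinv * L) * (D * (Dinv * L))"
proof -
  have W: "transpose_mat (Dinv * L) = transpose_mat L * Dinv"
    using transpose_mult[of Dinv p p L n] assms by simp
  have "transpose_mat L * Dinv * D * Dinv * L = transpose_mat L * Dinv * (D * (Dinv * L))"
    using assms by (simp add: assoc_mult_mat[of _ n p _ p _ n] assoc_mult_mat[of _ p p _ p _ n])
  then show ?thesis
    unfolding Lop_def W using assms by (simp add: assoc_mult_mat[of _ n p _ p _ n])
qed

lemma Lop_symmetric:
  fixes Lb L D Dinv :: "real mat"
  assumes "Lb \<in> carrier_mat p n" "L \<in> carrier_mat p n" "D \<in> carrier_mat p p" "Dinv \<in> carrier_mat p p"
    "transpose_mat Dinv = Dinv" "transpose_mat D = D"
  shows "transpose_mat (Lop Lb D L Dinv) = Lop Lb D L Dinv"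
proof -
  define W where "W = Dinv * L"
  have W: "W \<in> carrier_mat p n" using assms by (simp add: W_def)
  have "transpose_mat (transpose_mat W * (D * W)) = transpose_mat (D * W) * W"
    using W assms transpose_mult[of "transpose_mat W" n p "D * W" n] by simp
  also have "\<dots> = transpose_mat W * D * W"
    using W assms by (simp add: transpose_mult[of D p p W n])
  also have "\<dots> = transpose_mat W * (D * W)"
    using W assms by (simp add: assoc_mult_mat[of _ n p _ p _ n])
  finally have "transpose_mat (transpose_mat W * (D * W)) = transpose_mat W * (D * W)" .
  then show ?thesis
    unfolding Lop_eq[OF assms(1-5)] W_def[symmetric] using W assms
    by (simp add: transpose_minus[of _ n n] transpose_add[of _ n n] transpose_mult[of _ n p]
        comm_add_mat[of _ n n])
qed

lemma quadratic_form_Lop: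
  fixes Lb L D Dinv :: "real mat"
  assumes "Lb \<in> carrier_mat p n" "L \<in> carrier_mat p n" "D \<in> carrier_mat p p" "Dinv \<in> carrier_mat p p"
    "transpose_mat Dinv = Dinv" and v: "v \<in> carrier_vec n"
  shows "v \<bullet> (Lop Lb D L Dinv *\<^sub>v v)
    = 2 * ((Lb *\<^sub>v v) \<bullet> (Dinv *\<^sub>v (L *\<^sub>v v))) - (Dinv *\<^sub>v (L *\<^sub>v v)) \<bullet> (D *\<^sub>v (Dinv *\<^sub>v (L *\<^sub>v v)))"
proof -
  define W where "W = Dinv * L"
  have W: "W \<in> carrier_mat p n" using assms by (simp add: W_def)
  have Wv: "W *\<^sub>v v = Dinv *\<^sub>v (L *\<^sub>v v)" using assms by (simp add: W_def assoc_mult_mat_vec[of _ p p _ n])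
  have X: "transpose_mat Lb * W \<in> carrier_mat n n" "transpose_mat W * Lb \<in> carrier_mat n n"
    "transpose_mat W * (D * W) \<in> carrier_mat n n"
    "transpose_mat Lb * W + transpose_mat W * Lb \<in> carrier_mat n n" using W assms by auto
  have "v \<bullet> (Lop Lb D L Dinv *\<^sub>v v) = v \<bullet> ((transpose_mat Lb * W) *\<^sub>v v)
      + v \<bullet> ((transpose_mat W * Lb) *\<^sub>v v) - v \<bullet> ((transpose_mat W * (D * W)) *\<^sub>v v)"
    unfolding Lop_eq[OF assms(1-5)] W_def[symmetric]
      minus_mult_distrib_mat_vec[OF X(4,3) v] add_mult_distrib_mat_vec[OF X(1,2) v]
    using X v by (simp add: scalar_prod_minus_distrib[of _ n] scalar_prod_add_distrib[of _ n])
  also have "\<dots> = 2 * ((Lb *\<^sub>v v) \<bullet> (W *\<^sub>v v)) - (W *\<^sub>v v) \<bullet> (D *\<^sub>v (W *\<^sub>v v))"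
    using W assms comm_scalar_prod[of "W *\<^sub>v v" p "Lb *\<^sub>v v"]
    by (simp add: scalar_prod_transpose_mult_vec[of _ p n] assoc_mult_mat_vec[of _ n p _ n]
        assoc_mult_mat_vec[of D p p W n])
  finally show ?thesis unfolding Wv .
qed

lemma quadratic_form_Lop_le:
  fixes Lb L D Dinv E :: "real mat"
  assumes "Lb \<in> carrier_mat p n" "L \<in> carrier_mat p n" "pos_def_mat p D" "Dinv \<in> carrier_mat p p"
    "transpose_mat Dinv = Dinv" "E \<in> carrier_mat p p" "D * E = 1\<^sub>m p" "v \<in> carrier_vec n"
  shows "v \<bullet> (Lop Lb D L Dinv *\<^sub>v v) \<le> (Lb *\<^sub>v v) \<bullet> (E *\<^sub>v (Lb *\<^sub>v v))"
  using assms two_scalar_prod_le_quadratic_forms[OF assms(3,6,7), of "Lb *\<^sub>v v" "Dinv *\<^sub>v (L *\<^sub>v v)"]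
  by (simp add: quadratic_form_Lop[of _ p n] pos_def_mat_def)

lemma quadratic_form_Lop_self:
  fixes L D Dinv :: "real mat"
  assumes "L \<in> carrier_mat p n" "D \<in> carrier_mat p p" "Dinv \<in> carrier_mat p p"
    "transpose_mat Dinv = Dinv" "D * Dinv = 1\<^sub>m p" "v \<in> carrier_vec n"
  shows "v \<bullet> (Lop L D L Dinv *\<^sub>v v) = (L *\<^sub>v v) \<bullet> (Dinv *\<^sub>v (L *\<^sub>v v))"
proof -
  have "D *\<^sub>v (Dinv *\<^sub>v (L *\<^sub>v v)) = L *\<^sub>v v"
    using assoc_mult_mat_vec[of D p p Dinv p "L *\<^sub>v v"] assms by simp
  then show ?thesis
    using quadratic_form_Lop[OF assms(1,1-4,6)] assms
      comm_scalar_prod[of "Dinv *\<^sub>v (L *\<^sub>v v)" p "L *\<^sub>v v"] by simp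
qed

definition PI_mat :: "real mat \<Rightarrow> nat \<Rightarrow> real mat \<Rightarrow> real mat \<Rightarrow> real mat \<Rightarrow> real vec \<Rightarrow> real mat \<Rightarrow> real mat" where
  "PI_mat Pbar i A B K b D =
     four_block_mat
       (scal_mat (2 * b $ i - b \<bullet> (D *\<^sub>v b))) (row_mat Pbar i * (A + B * K))
       (transpose_mat (row_mat Pbar i * (A + B * K))) (transpose_mat Pbar * D * Pbar)"

definition LMI_coupling :: "nat \<Rightarrow> nat \<Rightarrow> real mat \<Rightarrow> nat \<Rightarrow> real mat \<Rightarrow> real mat \<Rightarrow> real vec \<Rightarrow> real mat" where
  "LMI_coupling m nx Pbar i Bb Kb bb =
     four_block_mat (- (transpose_mat Bb * transpose_mat (row_mat Pbar i))) Kb (mat_of_cols m [bb]) (0\<^sub>m m nx)"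

definition LMI_lower :: "nat \<Rightarrow> real mat \<Rightarrow> nat \<Rightarrow> real mat \<Rightarrow> real mat \<Rightarrow> real mat \<Rightarrow>
    real mat \<Rightarrow> real mat \<Rightarrow> real mat \<Rightarrow> real vec \<Rightarrow> real mat \<Rightarrow> real mat" where
  "LMI_lower nu Pbar i B K Dbar Ab Bb Kb bb Dh =
     four_block_mat
       (scal_mat (2 * bb $ i) + Lop (transpose_mat Bb * transpose_mat (row_mat Pbar i)) (1\<^sub>m nu)
                                    (transpose_mat B * transpose_mat (row_mat Pbar i)) (1\<^sub>m nu))
       (row_mat Pbar i * Ab) (transpose_mat (row_mat Pbar i * Ab))
       (Lop Pbar Dh Pbar Dbar + Lop Kb (1\<^sub>m nu) K (1\<^sub>m nu))"

lemma PI_cond_iff: "PI_cond nx Pbar i A B K b D \<longleftrightarrow> pos_def_mat (1 + nx) (PI_mat Pbar i A B K b D)"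
  by (simp add: PI_cond_def PI_mat_def)

lemma row_mat_carrier: "Pbar \<in> carrier_mat m nx \<Longrightarrow> i < m \<Longrightarrow> row_mat Pbar i \<in> carrier_mat 1 nx"
  by (simp add: row_mat_def)

lemma LMI_i_iff:
  assumes "Pbar \<in> carrier_mat m nx" "i < m" "Bb \<in> carrier_mat nx nu" "Kb \<in> carrier_mat nu nx"
  shows "LMI_i nx nu m Pbar i B K Dbar Ab Bb Kb bb Dh \<longleftrightarrow>
    pos_def_mat ((nu + m) + (1 + nx))
      (four_block_mat (four_block_mat (1\<^sub>m nu) (0\<^sub>m nu m) (0\<^sub>m m nu) Dh)
         (LMI_coupling m nx Pbar i Bb Kb bb) (transpose_mat (LMI_coupling m nx Pbar i Bb Kb bb))
         (LMI_lower nu Pbar i B K Dbar Ab Bb Kb bb Dh))"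
proof -
  have M13: "- (transpose_mat Bb * transpose_mat (row_mat Pbar i)) \<in> carrier_mat nu 1"
    using assms row_mat_carrier[OF assms(1,2)] by auto
  have M23: "mat_of_cols m [bb] \<in> carrier_mat m 1" by (simp add: mat_of_cols_def)
  have T: "transpose_mat (LMI_coupling m nx Pbar i Bb Kb bb) = four_block_mat
      (transpose_mat (- (transpose_mat Bb * transpose_mat (row_mat Pbar i)))) (transpose_mat (mat_of_cols m [bb]))
      (transpose_mat Kb) (transpose_mat (0\<^sub>m m nx))"
    unfolding LMI_coupling_def by (rule transpose_four_block_mat[OF M13 assms(4) M23 zero_carrier_mat])
  show ?thesis
    unfolding T unfolding LMI_i_def Let_def block4_def LMI_coupling_def LMI_lower_def
    by (simp add: add.assoc)
qed

lemma Lop_carrier: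
  "Lb \<in> carrier_mat p n \<Longrightarrow> L \<in> carrier_mat p n \<Longrightarrow> D \<in> carrier_mat p p \<Longrightarrow> Dinv \<in> carrier_mat p p
    \<Longrightarrow> Lop Lb D L Dinv \<in> carrier_mat n n"
  unfolding Lop_def by auto

lemma transpose_mat_1_1: "M \<in> carrier_mat 1 1 \<Longrightarrow> transpose_mat M = M"
  by (intro eq_matI) auto

lemma PI_mat_carrier_symmetric:
  assumes P: "Pbar \<in> carrier_mat m nx" and i: "i < m" and G: "A + B * K \<in> carrier_mat nx nx"
    and X: "X \<in> carrier_mat m m" "transpose_mat X = X"
  shows "PI_mat Pbar i A B K b X \<in> carrier_mat (1 + nx) (1 + nx)"
    "transpose_mat (PI_mat Pbar i A B K b X) = PI_mat Pbar i A B K b X"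
proof -
  have R: "row_mat Pbar i * (A + B * K) \<in> carrier_mat 1 nx" using row_mat_carrier[OF P i] G by auto
  have "transpose_mat (transpose_mat Pbar * X * Pbar) = transpose_mat Pbar * transpose_mat (transpose_mat Pbar * X)"
    using P X transpose_mult[of "transpose_mat Pbar * X" nx m Pbar nx] by simp
  also have "\<dots> = transpose_mat Pbar * X * Pbar"
    using P X transpose_mult[of "transpose_mat Pbar" nx m X m] by (simp add: assoc_mult_mat[of _ nx m _ m _ nx])
  finally have "transpose_mat (transpose_mat Pbar * X * Pbar) = transpose_mat Pbar * X * Pbar" .
  then show "PI_mat Pbar i A B K b X \<in> carrier_mat (1 + nx) (1 + nx)"
    "transpose_mat (PI_mat Pbar i A B K b X) = PI_mat Pbar i A B K b X"
    unfolding PI_mat_def using P X R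
    by (auto simp: transpose_four_block_mat[of _ 1 1 _ nx _ nx] transpose_mat_1_1 scal_mat_def)
qed

lemma LMI_lower_carrier_symmetric:
  assumes P: "Pbar \<in> carrier_mat m nx" and i: "i < m" and Ab: "Ab \<in> carrier_mat nx nx"
    and B: "B \<in> carrier_mat nx nu" and Bb: "Bb \<in> carrier_mat nx nu"
    and K: "K \<in> carrier_mat nu nx" and Kb: "Kb \<in> carrier_mat nu nx"
    and Dbar: "Dbar \<in> carrier_mat m m" "transpose_mat Dbar = Dbar"
    and Dh: "Dh \<in> carrier_mat m m" "transpose_mat Dh = Dh"
  shows "LMI_lower nu Pbar i B K Dbar Ab Bb Kb bb Dh \<in> carrier_mat (1 + nx) (1 + nx)"
    "transpose_mat (LMI_lower nu Pbar i B K Dbar Ab Bb Kb bb Dh) = LMI_lower nu Pbar i B K Dbar Ab Bb Kb bb Dh"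
proof -
  have Pi: "row_mat Pbar i \<in> carrier_mat 1 nx" by (rule row_mat_carrier[OF P i])
  define M33 where "M33 = scal_mat (2 * bb $ i)
    + Lop (transpose_mat Bb * transpose_mat (row_mat Pbar i)) (1\<^sub>m nu) (transpose_mat B * transpose_mat (row_mat Pbar i)) (1\<^sub>m nu)"
  define M44 where "M44 = Lop Pbar Dh Pbar Dbar + Lop Kb (1\<^sub>m nu) K (1\<^sub>m nu)"
  have "transpose_mat Bb * transpose_mat (row_mat Pbar i) \<in> carrier_mat nu 1"
    "transpose_mat B * transpose_mat (row_mat Pbar i) \<in> carrier_mat nu 1" using Pi B Bb by auto
  from Lop_carrier[OF this one_carrier_mat one_carrier_mat]
  have M33: "M33 \<in> carrier_mat 1 1" unfolding M33_def by (simp add: scal_mat_def)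
  have LP: "Lop Pbar Dh Pbar Dbar \<in> carrier_mat nx nx" and LK: "Lop Kb (1\<^sub>m nu) K (1\<^sub>m nu) \<in> carrier_mat nx nx"
    using P Dh Dbar K Kb by (auto intro!: Lop_carrier)
  have M44: "M44 \<in> carrier_mat nx nx" "transpose_mat M44 = M44"
    unfolding M44_def using LP LK Lop_symmetric[OF P P Dh(1) Dbar Dh(2)]
      Lop_symmetric[OF Kb K one_carrier_mat one_carrier_mat transpose_one transpose_one]
    by (auto simp: transpose_add[OF LP LK])
  have M34: "row_mat Pbar i * Ab \<in> carrier_mat 1 nx" using Pi Ab by auto
  show "LMI_lower nu Pbar i B K Dbar Ab Bb Kb bb Dh \<in> carrier_mat (1 + nx) (1 + nx)"
    "transpose_mat (LMI_lower nu Pbar i B K Dbar Ab Bb Kb bb Dh) = LMI_lower nu Pbar i B K Dbar Ab Bb Kb bb Dh"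
    unfolding LMI_lower_def M33_def[symmetric] M44_def[symmetric] using M33 M34 M44
    by (auto simp: transpose_four_block_mat[OF M33 M34 _ M44(1)] transpose_mat_1_1)
qed

lemma quadratic_form_LMI_schur_complement:
  assumes P: "Pbar \<in> carrier_mat m nx" and i: "i < m" and Ab: "Ab \<in> carrier_mat nx nx"
    and B: "B \<in> carrier_mat nx nu" and Bb: "Bb \<in> carrier_mat nx nu"
    and K: "K \<in> carrier_mat nu nx" and Kb: "Kb \<in> carrier_mat nu nx" and bb: "bb \<in> carrier_vec m"
    and Dbar: "Dbar \<in> carrier_mat m m" and Dh: "Dh \<in> carrier_mat m m" and X: "X \<in> carrier_mat m m"
    and x3: "x3 \<in> carrier_vec 1" and y: "y \<in> carrier_vec nx"
  defines "G \<equiv> transpose_mat Bb * transpose_mat (row_mat Pbar i)"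
    and "C \<equiv> LMI_coupling m nx Pbar i Bb Kb bb"
  shows "(x3 @\<^sub>v y) \<bullet> (LMI_lower nu Pbar i B K Dbar Ab Bb Kb bb Dh *\<^sub>v (x3 @\<^sub>v y))
      - (C *\<^sub>v (x3 @\<^sub>v y)) \<bullet> (four_block_mat (1\<^sub>m nu) (0\<^sub>m nu m) (0\<^sub>m m nu) X *\<^sub>v (C *\<^sub>v (x3 @\<^sub>v y)))
    = (x3 @\<^sub>v y) \<bullet> (PI_mat Pbar i Ab Bb Kb bb X *\<^sub>v (x3 @\<^sub>v y))
      - ((G *\<^sub>v x3) \<bullet> (G *\<^sub>v x3)
         - x3 \<bullet> (Lop G (1\<^sub>m nu) (transpose_mat B * transpose_mat (row_mat Pbar i)) (1\<^sub>m nu) *\<^sub>v x3))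
      - ((Pbar *\<^sub>v y) \<bullet> (X *\<^sub>v (Pbar *\<^sub>v y)) - y \<bullet> (Lop Pbar Dh Pbar Dbar *\<^sub>v y))
      - ((Kb *\<^sub>v y) \<bullet> (Kb *\<^sub>v y) - y \<bullet> (Lop Kb (1\<^sub>m nu) K (1\<^sub>m nu) *\<^sub>v y))"
proof -
  define Pi where "Pi = row_mat Pbar i"
  define s where "s = x3 $ 0"
  define g ky z where "g = G *\<^sub>v x3" and "ky = Kb *\<^sub>v y" and "z = Pbar *\<^sub>v y"
  define L33 where "L33 = Lop G (1\<^sub>m nu) (transpose_mat B * transpose_mat Pi) (1\<^sub>m nu)"
  define LP LK where "LP = Lop Pbar Dh Pbar Dbar" and "LK = Lop Kb (1\<^sub>m nu) K (1\<^sub>m nu)"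
  have Pi: "Pi \<in> carrier_mat 1 nx" unfolding Pi_def by (rule row_mat_carrier[OF P i])
  have Gc: "G \<in> carrier_mat nu 1" "transpose_mat B * transpose_mat Pi \<in> carrier_mat nu 1"
    using Bb B Pi unfolding G_def Pi_def by auto
  have g: "g \<in> carrier_vec nu" and ky: "ky \<in> carrier_vec nu" and z: "z \<in> carrier_vec m"
    using Gc x3 Kb y P by (auto simp: g_def ky_def z_def)
  have L33: "L33 \<in> carrier_mat 1 1" and LP: "LP \<in> carrier_mat nx nx" and LK: "LK \<in> carrier_mat nx nx"
    unfolding L33_def LP_def LK_def using Lop_carrier Gc P Dh Dbar Kb K by auto
  have S: "scal_mat c \<in> carrier_mat 1 1" for c by (simp add: scal_mat_def)
  have M33: "scal_mat (2 * bb $ i) + L33 \<in> carrier_mat 1 1" using L33 by (simp add: scal_mat_def)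
  have M44: "LP + LK \<in> carrier_mat nx nx" using LP LK by simp
  have scal: "x3 \<bullet> (scal_mat c *\<^sub>v x3) = c * (s * s)" for c
    using x3 by (simp add: s_def scal_mat_def scalar_prod_def)
  have "C *\<^sub>v (x3 @\<^sub>v y) = (ky - g) @\<^sub>v (s \<cdot>\<^sub>v bb)"
  proof -
    have "mat_of_cols m [bb] *\<^sub>v x3 = s \<cdot>\<^sub>v bb"
      using x3 bb by (intro eq_vecI) (auto simp: s_def mat_of_cols_def scalar_prod_def)
    moreover have "- g + ky = ky - g" using g ky by (intro eq_vecI) auto
    moreover have "0\<^sub>m m nx *\<^sub>v y = 0\<^sub>v m" using y by auto
    ultimately show ?thesis
      unfolding C_def LMI_coupling_def G_def[symmetric]
      using four_block_mat_mult_vec[of "- G" nu 1 Kb nx "mat_of_cols m [bb]" m "0\<^sub>m m nx" x3 y]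
        Gc Kb x3 y bb by (simp add: mat_of_cols_def g_def ky_def)
  qed
  moreover have "X *\<^sub>v (s \<cdot>\<^sub>v bb) = s \<cdot>\<^sub>v (X *\<^sub>v bb)" "0\<^sub>m nu m *\<^sub>v (s \<cdot>\<^sub>v bb) = 0\<^sub>v nu"
    using X bb by (auto simp: mult_mat_vec)
  ultimately have coupling: "(C *\<^sub>v (x3 @\<^sub>v y)) \<bullet> (four_block_mat (1\<^sub>m nu) (0\<^sub>m nu m) (0\<^sub>m m nu) X *\<^sub>v (C *\<^sub>v (x3 @\<^sub>v y)))
      = ky \<bullet> ky - 2 * (g \<bullet> ky) + g \<bullet> g + s * s * (bb \<bullet> (X *\<^sub>v bb))"
    using quadratic_form_four_block_mat[OF one_carrier_mat zero_carrier_mat X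
        minus_carrier_vec[OF ky g] smult_carrier_vec[THEN iffD2, OF bb]] g ky bb X comm_scalar_prod[OF g ky]
    by (simp add: scalar_prod_minus_distrib[of _ nu] minus_scalar_prod_distrib[of _ nu] algebra_simps)
  have lower: "(x3 @\<^sub>v y) \<bullet> (LMI_lower nu Pbar i B K Dbar Ab Bb Kb bb Dh *\<^sub>v (x3 @\<^sub>v y))
      = 2 * bb $ i * (s * s) + x3 \<bullet> (L33 *\<^sub>v x3) + 2 * (x3 \<bullet> ((Pi * Ab) *\<^sub>v y)) + y \<bullet> (LP *\<^sub>v y) + y \<bullet> (LK *\<^sub>v y)"
    unfolding LMI_lower_def G_def[symmetric] unfolding Pi_def[symmetric]
    unfolding L33_def[symmetric] LP_def[symmetric] LK_def[symmetric]
    unfolding quadratic_form_four_block_mat[OF M33 mult_carrier_mat[OF Pi Ab] M44 x3 y]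
    using x3 y L33 LP LK add_mult_distrib_mat_vec[OF S L33 x3]
      scalar_prod_add_distrib[OF x3 mult_mat_vec_carrier[OF S x3] mult_mat_vec_carrier[OF L33 x3]]
    by (simp add: add_mult_distrib_mat_vec[of _ nx nx] scalar_prod_add_distrib[of _ nx] scal)
  have "x3 \<bullet> ((Pi * (Ab + Bb * Kb)) *\<^sub>v y) = x3 \<bullet> ((Pi * Ab) *\<^sub>v y) + g \<bullet> ky"
  proof -
    have "g \<bullet> ky = x3 \<bullet> (Pi *\<^sub>v (Bb *\<^sub>v ky))"
      using scalar_prod_transpose_mult_vec[OF Bb, of ky "transpose_mat Pi *\<^sub>v x3"]
        scalar_prod_transpose_mult_vec[OF Pi, of "Bb *\<^sub>v ky" x3]
        comm_scalar_prod[of g nu ky] comm_scalar_prod[of x3 1 "Pi *\<^sub>v (Bb *\<^sub>v ky)"] Pi Bb x3 ky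
      by (simp add: g_def G_def Pi_def[symmetric] assoc_mult_mat_vec[of _ nu nx _ 1])
    moreover have "(Pi * (Ab + Bb * Kb)) *\<^sub>v y = (Pi * Ab) *\<^sub>v y + Pi *\<^sub>v (Bb *\<^sub>v ky)"
    proof -
      have BK: "Bb * Kb \<in> carrier_mat nx nx" using Bb Kb by simp
      have "(Pi * (Ab + Bb * Kb)) *\<^sub>v y = (Pi * Ab) *\<^sub>v y + (Pi * (Bb * Kb)) *\<^sub>v y"
        unfolding mult_add_distrib_mat[OF Pi Ab BK] using Pi Ab BK y
        by (intro add_mult_distrib_mat_vec) auto
      then show ?thesis
        using assoc_mult_mat_vec[OF Pi BK y] assoc_mult_mat_vec[OF Bb Kb y] by (simp add: ky_def)
    qed
    ultimately show ?thesis
      using Pi Ab Bb ky x3 y by (simp add: scalar_prod_add_distrib[OF x3])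
  qed
  moreover have "y \<bullet> ((transpose_mat Pbar * X * Pbar) *\<^sub>v y) = z \<bullet> (X *\<^sub>v z)"
    using P X y scalar_prod_transpose_mult_vec[OF P y, of "X *\<^sub>v z"]
    by (simp add: z_def assoc_mult_mat_vec[of _ nx m _ nx] assoc_mult_mat_vec[of _ nx m _ m])
  ultimately have PI: "(x3 @\<^sub>v y) \<bullet> (PI_mat Pbar i Ab Bb Kb bb X *\<^sub>v (x3 @\<^sub>v y))
      = (2 * bb $ i - bb \<bullet> (X *\<^sub>v bb)) * (s * s) + 2 * (x3 \<bullet> ((Pi * Ab) *\<^sub>v y)) + 2 * (g \<bullet> ky) + z \<bullet> (X *\<^sub>v z)"
    unfolding PI_mat_def Pi_def[symmetric]
    using quadratic_form_four_block_mat[OF S _ _ x3 y, of "Pi * (Ab + Bb * Kb)" "transpose_mat Pbar * X * Pbar"]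
      Pi Ab Bb Kb P X
    by (simp add: scal)
  show ?thesis
    unfolding coupling lower PI
    by (simp add: g_def ky_def z_def L33_def LP_def LK_def Pi_def algebra_simps)
qed

lemma LMI_coupling_carrier:
  "Pbar \<in> carrier_mat m nx \<Longrightarrow> i < m \<Longrightarrow> Bb \<in> carrier_mat nx nu \<Longrightarrow> Kb \<in> carrier_mat nu nx \<Longrightarrow>
    LMI_coupling m nx Pbar i Bb Kb bb \<in> carrier_mat (nu + m) (1 + nx)"
  unfolding LMI_coupling_def using row_mat_carrier[of Pbar m nx i]
  by (intro four_block_carrier_mat) auto

lemma mult_four_block_diag_one:
  fixes D X :: "'a :: semiring_1 mat"
  assumes "D \<in> carrier_mat m m" "X \<in> carrier_mat m m" "D * X = 1\<^sub>m m"
  shows "four_block_mat (1\<^sub>m n) (0\<^sub>m n m) (0\<^sub>m m n) D * four_block_mat (1\<^sub>m n) (0\<^sub>m n m) (0\<^sub>m m n) X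
    = 1\<^sub>m (n + m)"
  using assms by (simp add: mult_four_block_mat[of _ n n _ m _ m _ _ n _ m] right_add_zero_mat[of _ n n])

lemma LMI_i_imp_PI_cond:
  assumes P: "Pbar \<in> carrier_mat m nx" and i: "i < m" and Ab: "Ab \<in> carrier_mat nx nx"
    and B: "B \<in> carrier_mat nx nu" and Bb: "Bb \<in> carrier_mat nx nu"
    and K: "K \<in> carrier_mat nu nx" and Kb: "Kb \<in> carrier_mat nu nx" and bb: "bb \<in> carrier_vec m"
    and Dbar: "diag_pos_mat m Dbar" and Dh: "diag_pos_mat m Dh"
    and Dh_inv: "Dh_inv \<in> carrier_mat m m" "inverts_mat Dh Dh_inv"
    and LMI: "LMI_i nx nu m Pbar i B K Dbar Ab Bb Kb bb Dh"
  shows "PI_cond nx Pbar i Ab Bb Kb bb Dh_inv"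
proof -
  have Dh_pd: "pos_def_mat m Dh" and Dbar_pd: "pos_def_mat m Dbar"
    using Dh Dbar by (simp_all add: diag_pos_mat_imp_pos_def_mat)
  then have Dhc: "Dh \<in> carrier_mat m m" "transpose_mat Dh = Dh"
    and Dbarc: "Dbar \<in> carrier_mat m m" "transpose_mat Dbar = Dbar" by (auto simp: pos_def_mat_def)
  have inv: "Dh * Dh_inv = 1\<^sub>m m" using Dh_inv(2) Dhc unfolding inverts_mat_def by simp
  have Xc: "transpose_mat Dh_inv = Dh_inv"
    using pos_def_mat_inverse(1)[OF Dh_pd Dh_inv(1) inv] by (simp add: pos_def_mat_def)
  let ?C = "LMI_coupling m nx Pbar i Bb Kb bb"
  let ?E = "four_block_mat (1\<^sub>m nu) (0\<^sub>m nu m) (0\<^sub>m m nu) Dh_inv"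
  have "?E \<in> carrier_mat (nu + m) (nu + m)" using Dh_inv(1) by simp
  note schur = pos_def_mat_four_block_mat_iff[OF pos_def_mat_four_block_diag[OF pos_def_mat_one Dh_pd]
      this mult_four_block_diag_one[OF Dhc(1) Dh_inv(1) inv] LMI_coupling_carrier[OF P i Bb Kb]
      LMI_lower_carrier_symmetric[OF P i Ab B Bb K Kb Dbarc Dhc]]
  have "\<forall>v \<in> carrier_vec (1 + nx). v \<noteq> 0\<^sub>v (1 + nx) \<longrightarrow>
      (?C *\<^sub>v v) \<bullet> (?E *\<^sub>v (?C *\<^sub>v v)) < v \<bullet> (LMI_lower nu Pbar i B K Dbar Ab Bb Kb bb Dh *\<^sub>v v)"
    using LMI unfolding LMI_i_iff[OF P i Bb Kb] schur .
  moreover have "v \<bullet> (LMI_lower nu Pbar i B K Dbar Ab Bb Kb bb Dh *\<^sub>v v) - (?C *\<^sub>v v) \<bullet> (?E *\<^sub>v (?C *\<^sub>v v))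
      \<le> v \<bullet> (PI_mat Pbar i Ab Bb Kb bb Dh_inv *\<^sub>v v)" if v: "v \<in> carrier_vec (1 + nx)" for v
  proof -
    define x3 y where "x3 = vec_first v 1" and "y = vec_last v nx"
    have x3: "x3 \<in> carrier_vec 1" and y: "y \<in> carrier_vec nx" and v_eq: "v = x3 @\<^sub>v y"
      using v by (auto simp: x3_def y_def)
    have G: "transpose_mat Bb * transpose_mat (row_mat Pbar i) \<in> carrier_mat nu 1"
      "transpose_mat B * transpose_mat (row_mat Pbar i) \<in> carrier_mat nu 1"
      using row_mat_carrier[OF P i] Bb B by auto
    show ?thesis
      unfolding v_eq quadratic_form_LMI_schur_complement[OF P i Ab B Bb K Kb bb Dbarc(1) Dhc(1) Dh_inv(1) x3 y]
      using quadratic_form_Lop_le[OF G pos_def_mat_one one_carrier_mat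
          transpose_one one_carrier_mat _ x3]
        quadratic_form_Lop_le[OF P P Dh_pd Dbarc Dh_inv(1) inv y]
        quadratic_form_Lop_le[OF Kb K pos_def_mat_one one_carrier_mat
          transpose_one one_carrier_mat _ y]
        G x3 Kb y by simp
  qed
  ultimately have "0 < v \<bullet> (PI_mat Pbar i Ab Bb Kb bb Dh_inv *\<^sub>v v)"
    if "v \<in> carrier_vec (1 + nx)" "v \<noteq> 0\<^sub>v (1 + nx)" for v
    using that by fastforce
  then show ?thesis
    unfolding PI_cond_iff pos_def_mat_def
    using PI_mat_carrier_symmetric[OF P i _ Dh_inv(1) Xc] Ab Bb Kb by auto
qed

lemma PI_cond_imp_LMI_i:
  assumes P: "Pbar \<in> carrier_mat m nx" and i: "i < m" and A: "A \<in> carrier_mat nx nx"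
    and B: "B \<in> carrier_mat nx nu" and K: "K \<in> carrier_mat nu nx" and b: "b \<in> carrier_vec m"
    and Dbar: "diag_pos_mat m Dbar"
    and Dbar_inv: "Dbar_inv \<in> carrier_mat m m" "inverts_mat Dbar Dbar_inv"
    and PI: "PI_cond nx Pbar i A B K b Dbar"
  shows "LMI_i nx nu m Pbar i B K Dbar A B K b Dbar_inv"
proof -
  have Dbar_pd: "pos_def_mat m Dbar" using Dbar by (rule diag_pos_mat_imp_pos_def_mat)
  then have Dbarc: "Dbar \<in> carrier_mat m m" "transpose_mat Dbar = Dbar" by (auto simp: pos_def_mat_def)
  have inv: "Dbar * Dbar_inv = 1\<^sub>m m" using Dbar_inv(2) Dbarc unfolding inverts_mat_def by simp
  note Y = pos_def_mat_inverse[OF Dbar_pd Dbar_inv(1) inv]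
  have Yc: "transpose_mat Dbar_inv = Dbar_inv" using Y(1) by (simp add: pos_def_mat_def)
  let ?C = "LMI_coupling m nx Pbar i B K b"
  let ?E = "four_block_mat (1\<^sub>m nu) (0\<^sub>m nu m) (0\<^sub>m m nu) Dbar"
  have "v \<bullet> (LMI_lower nu Pbar i B K Dbar A B K b Dbar_inv *\<^sub>v v) - (?C *\<^sub>v v) \<bullet> (?E *\<^sub>v (?C *\<^sub>v v))
      = v \<bullet> (PI_mat Pbar i A B K b Dbar *\<^sub>v v)" if v: "v \<in> carrier_vec (1 + nx)" for v
  proof -
    define x3 y where "x3 = vec_first v 1" and "y = vec_last v nx"
    have x3: "x3 \<in> carrier_vec 1" and y: "y \<in> carrier_vec nx" and v_eq: "v = x3 @\<^sub>v y"
      using v by (auto simp: x3_def y_def)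
    have G: "transpose_mat B * transpose_mat (row_mat Pbar i) \<in> carrier_mat nu 1"
      using row_mat_carrier[OF P i] B by auto
    show ?thesis
      unfolding v_eq quadratic_form_LMI_schur_complement[OF P i A B B K K b Dbarc(1) Dbar_inv(1) Dbarc(1) x3 y]
      using quadratic_form_Lop_self[OF G one_carrier_mat one_carrier_mat transpose_one _ x3]
        quadratic_form_Lop_self[OF P Dbar_inv(1) Dbarc Y(2) y]
        quadratic_form_Lop_self[OF K one_carrier_mat one_carrier_mat transpose_one _ y]
        G x3 K y by simp
  qed
  moreover have "0 < v \<bullet> (PI_mat Pbar i A B K b Dbar *\<^sub>v v)"
    if "v \<in> carrier_vec (1 + nx)" "v \<noteq> 0\<^sub>v (1 + nx)" for v
    using PI that unfolding PI_cond_iff pos_def_mat_def by blast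
  ultimately have "\<forall>v \<in> carrier_vec (1 + nx). v \<noteq> 0\<^sub>v (1 + nx) \<longrightarrow>
      (?C *\<^sub>v v) \<bullet> (?E *\<^sub>v (?C *\<^sub>v v)) < v \<bullet> (LMI_lower nu Pbar i B K Dbar A B K b Dbar_inv *\<^sub>v v)"
    by (metis diff_gt_0_iff_gt)
  moreover have "?E \<in> carrier_mat (nu + m) (nu + m)" using Dbarc by simp
  note schur = pos_def_mat_four_block_mat_iff[OF
      pos_def_mat_four_block_diag[OF pos_def_mat_one Y(1)]
      this mult_four_block_diag_one[OF Dbar_inv(1) Dbarc(1) Y(2)] LMI_coupling_carrier[OF P i B K]
      LMI_lower_carrier_symmetric[OF P i A B B K K Dbarc Dbar_inv(1) Yc]]
  ultimately show ?thesis
    unfolding LMI_i_iff[OF P i B K] schur by blast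
qed

theorem theorem3:
  fixes nx nu m i :: nat
    and Pbar A B K Dbar Dbar_inv :: "real mat" and b :: "real vec"
  assumes "Pbar \<in> carrier_mat m nx" and "i < m"
    and "A \<in> carrier_mat nx nx" and "B \<in> carrier_mat nx nu" and "K \<in> carrier_mat nu nx"
    and "b \<in> carrier_vec m"
    and "diag_pos_mat m Dbar"
    and "Dbar_inv \<in> carrier_mat m m" and "inverts_mat Dbar Dbar_inv"
    and "PI_cond nx Pbar i A B K b Dbar"
  shows "LMI_i nx nu m Pbar i B K Dbar A B K b Dbar_inv
    \<and> (\<forall>Ab Bb Kb bb Dh Dh_inv.
          Ab \<in> carrier_mat nx nx \<longrightarrow> Bb \<in> carrier_mat nx nu \<longrightarrow> Kb \<in> carrier_mat nu nx \<longrightarrow>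
          bb \<in> carrier_vec m \<longrightarrow> diag_pos_mat m Dh \<longrightarrow>
          Dh_inv \<in> carrier_mat m m \<longrightarrow> inverts_mat Dh Dh_inv \<longrightarrow>
          LMI_i nx nu m Pbar i B K Dbar Ab Bb Kb bb Dh \<longrightarrow>
          PI_cond nx Pbar i Ab Bb Kb bb Dh_inv)"
  using PI_cond_imp_LMI_i[OF assms] LMI_i_imp_PI_cond[OF assms(1,2) _ assms(4) _ assms(5) _ _ assms(7)]
  by blast

end
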